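(* Fix $d\ge3$, let $C$ be an indeterminate, and let $\phi_{(d,C)}(x)=x^d-Cdx^{d-1}+C(d-1)\in\mathbb{Z}[C][x]$. For every $n\ge1$, all roots in $\overline{\mathbb{Q}}$ of the polynomial $\phi_{(C,n)}(0):=\phi_{(d,C)}^n(0)\in\mathbb{Z}[C]$ are simple.
   Context: $\phi^n$ denotes the $n$-fold iterate in the variable $x$. *)

theory Defs
  imports Complex_Main "HOL-Computational_Algebra.Polynomial"
begin

text \<open>phi_(d,C)(x) = x^d - C d x^(d-1) + C (d-1), as a map on Z[C] (C = [:0,1:]).\<close>
definition phiC :: "nat \<Rightarrow> int poly \<Rightarrow> int poly" where
  "phiC d x = x ^ d - [:0, int d:] * x ^ (d - 1) + [:0, int d - 1:]"

definition phi_iter0 :: "nat \<Rightarrow> nat \<Rightarrow> int poly" where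
  "phi_iter0 d n = (phiC d ^^ n) 0"

end

theory Submission
  imports Defs "Berlekamp_Zassenhaus.Square_Free_Int_To_Square_Free_GFp"
begin

text \<open>Let \<open>p\<close> be a prime dividing \<open>d\<close>. Modulo \<open>p\<close> the map \<open>\<phi>\<close> is \<open>x \<mapsto> x\<^sup>d - C\<close>, so every
  iterate \<open>f = \<phi>\<^sup>n(0)\<close> has leading coefficient prime to \<open>p\<close>, while \<open>f' \<equiv> -1 (mod p)\<close>.
  A square factor \<open>q\<^sup>2\<close> of \<open>f\<close> of positive degree would divide \<open>f'\<close> once and hence, reducing
  modulo \<open>p\<close>, a nonconstant polynomial would divide the unit \<open>-1\<close>. Thus \<open>f\<close> is square-free in
  \<open>\<int>[C]\<close>, hence over \<open>\<rat>\<close> and over \<open>\<complex>\<close>, i.e. its complex roots are simple.\<close>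

hide_const (open) Coset.order module.smult up_ring.coeff

lemma coeff_mult_degree_add:
  fixes q r :: "'a::comm_semiring_0 poly"
  shows "coeff (q * r) (degree q + j) =
           (\<Sum>i<degree q. coeff q i * coeff r (degree q + j - i)) + lead_coeff q * coeff r j"
proof -
  let ?k = "degree q" and ?a = "\<lambda>i. coeff q i * coeff r (degree q + j - i)"
  have "coeff (q * r) (?k + j) = (\<Sum>i\<le>?k + j. ?a i)"
    by (simp add: coeff_mult)
  also have "\<dots> = (\<Sum>i\<le>?k. ?a i)"
    by (rule sum.mono_neutral_right) (auto simp: coeff_eq_0)
  also have "\<dots> = (\<Sum>i<?k. ?a i) + ?a ?k"
    by (simp add: lessThan_Suc_atMost[symmetric] sum.lessThan_Suc)
  finally show ?thesis by simp
qed

lemma prime_dvd_coeff_if_prime_dvd_high_coeffs_mult: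
  fixes p :: int and q r :: "int poly"
  assumes p: "prime p" and lc: "\<not> p dvd lead_coeff q"
    and high: "\<And>i. i \<ge> degree q \<Longrightarrow> p dvd coeff (q * r) i"
  shows "p dvd coeff r j"
proof (induction "degree r - j" arbitrary: j rule: less_induct)
  case less
  show ?case
  proof (cases "j \<le> degree r")
    case False
    then show ?thesis by (simp add: coeff_eq_0)
  next
    case True
    have "p dvd coeff r (degree q + j - i)" if "i < degree q" for i
    proof (cases "degree q + j - i \<le> degree r")
      case True
      then show ?thesis using less[of "degree q + j - i"] that by simp
    next
      case False
      then show ?thesis by (simp add: coeff_eq_0)
    qed
    then have "p dvd (\<Sum>i<degree q. coeff q i * coeff r (degree q + j - i))"
      by (auto intro!: dvd_sum dvd_mult)
    moreover have "p dvd coeff (q * r) (degree q + j)"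
      by (simp add: high)
    ultimately have "p dvd lead_coeff q * coeff r j"
      by (simp add: coeff_mult_degree_add dvd_add_right_iff)
    then show ?thesis
      using p lc prime_dvd_mult_iff by blast
  qed
qed

text \<open>Reduced modulo \<open>p\<close>, the hypothesis says that \<open>q\<close> divides the unit \<open>-1\<close> while keeping its
  degree.\<close>

lemma degree_eq_0_if_mult_eq_smult_minus_1:
  fixes p :: int and q r c :: "int poly"
  assumes p: "prime p" and lc: "\<not> p dvd lead_coeff q" and qr: "q * r = smult p c - 1"
  shows "degree q = 0"
proof (rule ccontr)
  assume "degree q \<noteq> 0"
  then have "p dvd coeff (q * r) i" if "i \<ge> degree q" for i
    using that by (simp add: qr)
  then have "p dvd coeff r 0"
    by (rule prime_dvd_coeff_if_prime_dvd_high_coeffs_mult[OF p lc])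
  then have "p dvd coeff (q * r) 0"
    by (simp add: coeff_mult)
  then have "p dvd p * coeff c 0 - 1"
    by (simp add: qr)
  then have "p dvd 1"
    by (simp add: dvd_diff_right_iff)
  then show False
    using p not_prime_unit by blast
qed

lemma square_free_if_pderiv_eq_smult_minus_1:
  fixes p :: int and f c :: "int poly"
  assumes p: "prime p" and lc: "\<not> p dvd lead_coeff f" and f': "pderiv f = smult p c - 1"
  shows "square_free f"
proof (rule square_freeI)
  fix q assume "degree q > 0" and "q * q dvd f"
  then obtain k where f: "f = q * q * k"
    by (elim dvdE)
  have "pderiv f = q * (2 * pderiv q * k + q * pderiv k)"
    unfolding f by (simp add: pderiv_mult algebra_simps mult_2)
  moreover have "\<not> p dvd lead_coeff q"
    using lc unfolding f lead_coeff_mult by (metis dvd_mult2)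
  ultimately have "degree q = 0"
    using degree_eq_0_if_mult_eq_smult_minus_1[OF p] f' by metis
  with \<open>degree q > 0\<close> show False by simp
qed (use lc in auto)

lemma order_of_int_poly_eq_1_if_square_free:
  fixes f :: "int poly" and z :: complex
  assumes "square_free f" and "poly (of_int_poly f) z = 0"
  shows "order z (of_int_poly f) = 1"
proof -
  interpret field_hom_0' "of_rat :: rat \<Rightarrow> complex" ..
  have "map_poly of_rat (map_poly rat_of_int f) = (of_int_poly f :: complex poly)"
    by (simp add: map_poly_map_poly o_def)
  then have "square_free (of_int_poly f :: complex poly)"
    using square_free_map_poly square_free_int_rat[OF assms(1)] by metis
  then have "rsquarefree (of_int_poly f :: complex poly)"
    by (rule square_free_rsquarefree)
  then show ?thesis
    using assms(2) order_root unfolding rsquarefree_def by metis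
qed

lemma pderiv_phiC: "\<exists>A. pderiv (phiC d g) = smult (int d) A - 1"
proof -
  have linear_term: "[:0, int d:] * h = smult (int d) ([:0, 1:] * h)" for h :: "int poly"
    by (simp only: mult_smult_left[symmetric] smult_pCons smult_0_right mult_zero_right mult_1_right)
  have constant_term: "[:int d - 1:] = smult (int d) 1 - 1"
    unfolding smult_one by (simp only: one_pCons diff_pCons diff_zero)
  have "pderiv (phiC d g) =
      pderiv (g ^ d) - smult (int d) (pderiv ([:0, 1:] * g ^ (d - 1))) + [:int d - 1:]"
    unfolding phiC_def linear_term
    by (simp only: pderiv_add pderiv_diff pderiv_smult pderiv_pCons pderiv_0 pCons_0_0
        add_0_left add_0_right)
  also have "\<dots> = smult (int d) (g ^ (d - 1) * pderiv g - pderiv ([:0, 1:] * g ^ (d - 1)) + 1) - 1"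
    unfolding constant_term
    by (simp only: pderiv_power smult_diff_right smult_add_right mult_smult_left add_diff_eq)
  finally show ?thesis by blast
qed

lemma degree_phiC_le:
  assumes "d \<ge> 1" and "degree g \<ge> 1"
  shows "degree (phiC d g) \<le> d * degree g"
proof -
  have "degree (g ^ d) \<le> d * degree g"
    by (metis degree_power_le mult.commute)
  moreover have "degree ([:0, int d:] * g ^ (d - 1)) \<le> d * degree g"
  proof -
    have "degree ([:0, int d:] * g ^ (d - 1)) \<le> 1 + (d - 1) * degree g"
      using degree_mult_le[of "[:0, int d:]" "g ^ (d - 1)"] degree_power_le[of g "d - 1"]
      by (simp add: mult.commute)
    also have "\<dots> \<le> d * degree g"
      using assms by (cases d) auto
    finally show ?thesis .
  qed
  moreover have "degree [:0, int d - 1:] \<le> d * degree g"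
    using assms by (simp add: degree_pCons_le order_trans[OF degree_pCons_le])
  ultimately show ?thesis
    unfolding phiC_def by (intro degree_add_le degree_diff_le)
qed

lemma coeff_phiC_top:
  assumes "d \<ge> 2" and "degree g \<ge> 1"
  shows "coeff (phiC d g) (d * degree g) =
           lead_coeff g ^ d - int d * coeff (g ^ (d - 1)) (d * degree g - 1)"
proof -
  have "2 * 1 \<le> d * degree g"
    using assms by (intro mult_le_mono)
  then obtain k where k: "d * degree g = Suc (Suc k)"
    by (metis add_2_eq_Suc' le_add_diff_inverse2 mult_1_right)
  have "g \<noteq> 0"
    using assms by auto
  then have "degree (g ^ d) = d * degree g"
    by (rule Polynomial.degree_power_eq)
  then have "coeff (g ^ d) (d * degree g) = lead_coeff g ^ d"
    by (metis lead_coeff_power)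
  then show ?thesis
    unfolding phiC_def k by simp
qed

lemma degree_lead_coeff_phiC:
  fixes P :: int
  assumes P: "prime P" "P dvd int d" and d: "d \<ge> 2"
    and g: "degree g \<ge> 1" "\<not> P dvd lead_coeff g"
  shows "degree (phiC d g) = d * degree g \<and> \<not> P dvd lead_coeff (phiC d g)"
proof -
  have top: "\<not> P dvd coeff (phiC d g) (d * degree g)"
  proof
    assume "P dvd coeff (phiC d g) (d * degree g)"
    then have "P dvd lead_coeff g ^ d"
      using P(2) by (simp add: coeff_phiC_top[OF d g(1)] dvd_diff_left_iff)
    then show False
      using P(1) g(2) prime_dvd_power by blast
  qed
  then have "d * degree g \<le> degree (phiC d g)"
    by (intro le_degree) auto
  then have "degree (phiC d g) = d * degree g"
    using degree_phiC_le[of d g] d g(1) by simp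
  with top show ?thesis by simp
qed

lemma phi_iter0_Suc: "phi_iter0 d (Suc n) = phiC d (phi_iter0 d n)"
  unfolding phi_iter0_def by simp

lemma phi_iter0_1:
  assumes "d \<ge> 2"
  shows "phi_iter0 d 1 = [:0, int d - 1:]"
  using assms by (simp add: phi_iter0_def phiC_def zero_power)

lemma degree_lead_coeff_phi_iter0:
  fixes P :: int
  assumes P: "prime P" "P dvd int d" and d: "d \<ge> 2" and n: "n \<ge> 1"
  shows "degree (phi_iter0 d n) \<ge> 1 \<and> \<not> P dvd lead_coeff (phi_iter0 d n)"
  using n
proof (induction n rule: nat_induct_at_least)
  case base
  have "\<not> P dvd int d - 1"
    using P by (metis dvd_diff_right_iff not_prime_unit)
  moreover have "int d - 1 \<noteq> 0"
    using d by simp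
  ultimately show ?case
    unfolding phi_iter0_1[OF d] by simp
next
  case (Suc n)
  let ?g = "phi_iter0 d n"
  have "degree (phiC d ?g) = d * degree ?g \<and> \<not> P dvd lead_coeff (phiC d ?g)"
    using degree_lead_coeff_phiC[OF P d] Suc.IH by blast
  moreover have "1 * 1 \<le> d * degree ?g"
    using d Suc.IH by (intro mult_le_mono) auto
  ultimately show ?case
    unfolding phi_iter0_Suc by (metis mult_1)
qed

theorem lemma5p2:
  fixes d n :: nat
  assumes "d \<ge> 3" and "n \<ge> 1"
  shows "\<forall>z::complex. poly (map_poly of_int (phi_iter0 d n)) z = 0 \<longrightarrow>
           order z (map_poly of_int (phi_iter0 d n)) = 1"
proof (intro allI impI)
  fix z :: complex
  assume root: "poly (map_poly of_int (phi_iter0 d n)) z = 0"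
  obtain p :: nat where "prime p" "p dvd d"
    using assms(1) prime_factor_nat[of d] by auto
  then have P: "prime (int p)" "int p dvd int d"
    by simp_all
  obtain m where n: "n = Suc m"
    using assms(2) by (cases n) auto
  obtain A where "pderiv (phi_iter0 d n) = smult (int d) A - 1"
    unfolding n phi_iter0_Suc using pderiv_phiC by blast
  then have "pderiv (phi_iter0 d n) = smult (int p) (smult (int d div int p) A) - 1"
    using P(2) by simp
  moreover have "\<not> int p dvd lead_coeff (phi_iter0 d n)"
    using degree_lead_coeff_phi_iter0[OF P _ assms(2)] assms(1) by simp
  ultimately have "square_free (phi_iter0 d n)"
    using square_free_if_pderiv_eq_smult_minus_1[OF P(1)] by blast
  then show "order z (map_poly of_int (phi_iter0 d n)) = 1"
    using root by (rule order_of_int_poly_eq_1_if_square_free)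
qed

end
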